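(* As $n\to\infty$: (i) for fixed $j\ge1$, $\mathbb{E}[D_{n,j}]\sim \frac{\Gamma(j-1/2)}{\Gamma(j)}\,n^{1/2}$ and $\operatorname{Var}[D_{n,j}]\sim\left(\frac{4}{2j-1}-\frac{\Gamma^2(j-1/2)}{\Gamma^2(j)}\right)n$; (ii) if $j=j(n)\le n$ with $j\to\infty$, then $\mathbb{E}[D_{n,j}]\sim (n/j)^{1/2}$; (iii) if $j=j(n)\to\infty$ with $j=o(n)$, then $\operatorname{Var}[D_{n,j}]\sim n/j$; (iv) if $j=j(n)$ with $j/n\to\theta\in(0,1)$, then $\operatorname{Var}[D_{n,j}]\to 1/\theta-1/\sqrt{\theta}$.
   Context: A plane-oriented recursive tree (PORT) is the random sequence of trees $(T_n)_{n\ge1}$ defined as follows. $T_1$ is a single node labeled $1$ (the root). For $n\ge2$, $T_n$ is obtained from $T_{n-1}$ by adding a node labeled $n$ and an edge joining it to a node $i\in\{1,\dots,n-1\}$ of $T_{n-1}$, where, conditionally on $T_1,\dots,T_{n-1}$, node $i$ is chosen with probability $(c_{n-1,i}+1)/(2n-3)$, with $c_{n-1,i}$ the number of children of $i$ in $T_{n-1}$. $D_{n,j}$ denotes the degree of the node labeled $j$ in $T_n$. $a_n\sim b_n$ means $a_n/b_n\to1$. *)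

theory Defs
  imports "HOL-Probability.Probability" "HOL-Library.Landau_Symbols"
begin

text \<open>A plane-oriented recursive tree T_n is encoded by the list of parents
  of the nodes 2, 3, ..., n (the k-th entry, 0-based, is the parent of node k+2).
  Attaching node n+1 to node i of T_n (nodes 1..n) with probability
  (c_{n,i}+1)/(2n-1) is the uniform choice from the multiset containing every
  node of T_n once plus one copy of i per child of i, i.e. mset ps + mset [1..<n+1].\<close>

fun port :: "nat \<Rightarrow> nat list pmf" where
  "port 0 = return_pmf []"
| "port (Suc n) =
     (if n = 0 then return_pmf []
      else bind_pmf (port n)
             (\<lambda>ps. map_pmf (\<lambda>i. ps @ [i])
                     (pmf_of_multiset (mset ps + mset [1..<Suc n]))))"

definition children :: "nat list \<Rightarrow> nat \<Rightarrow> nat" where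
  "children ps i = count (mset ps) i"

text \<open>Degree of node j (graph degree: children plus the edge to the parent,
  which exists for every non-root node j \<ge> 2).\<close>
definition deg :: "nat list \<Rightarrow> nat \<Rightarrow> nat" where
  "deg ps j = children ps j + (if j \<ge> 2 then 1 else 0)"

definition ED :: "nat \<Rightarrow> nat \<Rightarrow> real" where
  "ED n j = measure_pmf.expectation (port n) (\<lambda>ps. real (deg ps j))"

definition VarD :: "nat \<Rightarrow> nat \<Rightarrow> real" where
  "VarD n j = measure_pmf.variance (port n) (\<lambda>ps. real (deg ps j))"

end

theory Submission
  imports Defs "HOL-Real_Asymp.Real_Asymp"
begin

text \<open>Write c for the number of children of node j, so that D_{n,j} = c + 1 for j \<ge> 2 and
  D_{n,1} = c. Given T_n, node j receives node n+1 with probability (c+1)/(2n-1); since c+1 times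
  the forward difference of the rising factorial (c+1)^(k) is k (c+1)^(k), every step multiplies
  E (c+1)^(k) by 1 + k/(2n-1), starting from k! when node j is born. For k = 1 this product is
  Gamma(n) Gamma(j-1/2) / (Gamma(j) Gamma(n-1/2)), for k = 2 it telescopes to (2n-1)/(2j-1), which gives
  mean and variance in closed form. All four regimes then follow from
  Gamma(m)/Gamma(m-1/2) ~ sqrt m, a consequence of Gauss's product formula at 1/2. The variance
  constant in (i) is positive because Gamma(m)^2 / ((m-1) Gamma(m-1/2)^2) decreases strictly to 1.\<close>

section \<open>Moments of the number of children\<close>

lemma set_pmf_port:
  assumes "n \<ge> 1" "ps \<in> set_pmf (port n)"
  shows "length ps = n - 1 \<and> set ps \<subseteq> {1..<n}"
  using assms
proof (induction n arbitrary: ps)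
  case 0
  then show ?case by simp
next
  case (Suc n)
  show ?case
  proof (cases "n = 0")
    case True
    then show ?thesis using Suc.prems by simp
  next
    case False
    have "mset qs + mset [1..<Suc n] \<noteq> {#}" for qs :: "nat list"
      using False by simp
    with Suc.prems False obtain qs i where qs: "qs \<in> set_pmf (port n)" and "ps = qs @ [i]"
      and "i \<in> set_mset (mset qs + mset [1..<Suc n])"
      by (auto simp: set_pmf_of_multiset)
    moreover have "length qs = n - 1" "set qs \<subseteq> {1..<n}"
      using Suc.IH[OF _ qs] False by auto
    ultimately show ?thesis using False by auto
  qed
qed

lemma finite_set_pmf_port: "finite (set_pmf (port n))"
proof (rule finite_subset)
  show "set_pmf (port n) \<subseteq> {ps. set ps \<subseteq> {0..<n} \<and> length ps = n - 1}"
  proof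
    fix ps assume "ps \<in> set_pmf (port n)"
    then show "ps \<in> {ps. set ps \<subseteq> {0..<n} \<and> length ps = n - 1}"
      using set_pmf_port[of n ps] by (cases "n = 0") auto
  qed
qed (rule finite_lists_length_eq, simp)

lemma integrable_port [simp]: "integrable (measure_pmf (port n)) (f :: nat list \<Rightarrow> real)"
  by (rule integrable_measure_pmf_finite[OF finite_set_pmf_port])

lemma children_port_self:
  assumes "1 \<le> j" "ps \<in> set_pmf (port j)"
  shows "children ps j = 0"
  using set_pmf_port[OF assms] by (auto simp: children_def count_eq_zero_iff)

lemma expectation_bind_pmf_finite:
  fixes p :: "'a pmf" and f :: "'a \<Rightarrow> 'b pmf" and h :: "'b \<Rightarrow> real"
  assumes "finite (set_pmf p)" "\<And>x. x \<in> set_pmf p \<Longrightarrow> finite (set_pmf (f x))"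
  shows "measure_pmf.expectation (p \<bind> f) h =
         measure_pmf.expectation p (\<lambda>x. measure_pmf.expectation (f x) h)"
  using pmf_expectation_bind[OF assms order_refl, where h=h]
    integral_measure_pmf[OF assms(1), of p "\<lambda>x. measure_pmf.expectation (f x) h"]
  by simp

lemma pmf_attach_node:
  assumes "ps \<in> set_pmf (port n)" "1 \<le> j" "j \<le> n"
  shows "pmf (pmf_of_multiset (mset ps + mset [1..<Suc n])) j =
         (real (children ps j) + 1) / (2 * real n - 1)"
  using set_pmf_port[of n ps] assms
  by (simp add: children_def of_nat_diff)

lemma expectation_attach_node:
  fixes f :: "nat \<Rightarrow> real"
  assumes "ps \<in> set_pmf (port n)" "1 \<le> j" "j \<le> n"
  defines "c \<equiv> children ps j"
  shows "measure_pmf.expectation (pmf_of_multiset (mset ps + mset [1..<Suc n]))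
           (\<lambda>i. f (children (ps @ [i]) j))
         = f c + (f (c + 1) - f c) * (real c + 1) / (2 * real n - 1)"
proof -
  define M where "M = pmf_of_multiset (mset ps + mset [1..<Suc n])"
  have "finite (set_pmf M)"
    using assms(2,3) by (simp add: M_def)
  moreover have "(\<lambda>i. f (children (ps @ [i]) j)) = (\<lambda>i. f c + (f (c + 1) - f c) * indicator {j} i)"
    by (auto simp: c_def children_def indicator_def)
  ultimately have "measure_pmf.expectation M (\<lambda>i. f (children (ps @ [i]) j))
      = f c + (f (c + 1) - f c) * pmf M j"
    by (simp add: integrable_measure_pmf_finite measure_pmf.prob_space measure_pmf_single)
  then show ?thesis
    using pmf_attach_node[OF assms(1-3)] by (simp add: M_def c_def)
qed

lemma expectation_port_Suc:
  fixes f :: "nat \<Rightarrow> real"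
  assumes "1 \<le> j" "j \<le> n"
  shows "measure_pmf.expectation (port (Suc n)) (\<lambda>ps. f (children ps j)) =
         measure_pmf.expectation (port n) (\<lambda>ps. f (children ps j) +
           (f (children ps j + 1) - f (children ps j)) * (real (children ps j) + 1) / (2 * real n - 1))"
proof -
  let ?M = "\<lambda>ps. pmf_of_multiset (mset ps + mset [1..<Suc n])"
  have "port (Suc n) = port n \<bind> (\<lambda>ps. map_pmf (\<lambda>i. ps @ [i]) (?M ps))"
    using assms by simp
  then have "measure_pmf.expectation (port (Suc n)) (\<lambda>ps. f (children ps j)) =
      measure_pmf.expectation (port n)
        (\<lambda>ps. measure_pmf.expectation (?M ps) (\<lambda>i. f (children (ps @ [i]) j)))"
    using assms by (simp add: expectation_bind_pmf_finite finite_set_pmf_port)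
  also have "\<dots> = measure_pmf.expectation (port n) (\<lambda>ps. f (children ps j) +
           (f (children ps j + 1) - f (children ps j)) * (real (children ps j) + 1) / (2 * real n - 1))"
    using assms by (intro integral_cong_AE AE_pmfI expectation_attach_node) simp_all
  finally show ?thesis .
qed

lemma pochhammer_forward_difference:
  fixes x :: "'a :: comm_ring_1"
  shows "x * (pochhammer (x + 1) k - pochhammer x k) = of_nat k * pochhammer x k"
proof (cases k)
  case (Suc m)
  then show ?thesis
    unfolding Suc pochhammer_rec[of x m] pochhammer_rec'[of "x + 1" m] by (simp add: algebra_simps)
qed simp

theorem factorial_moment_port:
  assumes "1 \<le> j" "j \<le> n"
  shows "measure_pmf.expectation (port n) (\<lambda>ps. pochhammer (real (children ps j) + 1) k) =
         fact k * (\<Prod>m = j..<n. 1 + real k / (2 * real m - 1))"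
  using assms(2)
proof (induction n rule: dec_induct)
  case base
  have "measure_pmf.expectation (port j) (\<lambda>ps. pochhammer (real (children ps j) + 1) k) =
        measure_pmf.expectation (port j) (\<lambda>_. fact k)"
    using assms(1) by (intro integral_cong_AE AE_pmfI) (simp_all add: children_port_self pochhammer_fact)
  then show ?case by (simp add: measure_pmf.prob_space)
next
  case (step n)
  let ?f = "\<lambda>c. pochhammer (real c + 1) k"
  let ?D = "2 * real n - 1"
  have "?f c + (?f (c + 1) - ?f c) * (real c + 1) / ?D = ?f c * (1 + real k / ?D)" for c
    using pochhammer_forward_difference[of "real c + 1" k]
    by (simp add: add.commute mult.commute add_divide_distrib distrib_left)
  then have "measure_pmf.expectation (port (Suc n)) (\<lambda>ps. ?f (children ps j)) =
      measure_pmf.expectation (port n) (\<lambda>ps. ?f (children ps j) * (1 + real k / ?D))"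
    using expectation_port_Suc[of j n ?f] assms step.hyps by simp
  also have "\<dots> = fact k * (\<Prod>m = j..<Suc n. 1 + real k / (2 * real m - 1))"
    using step by (simp add: prod.atLeastLessThan_Suc)
  finally show ?case .
qed

section \<open>The ratio Gamma(m) / Gamma(m - 1/2)\<close>

definition gamma_ratio :: "nat \<Rightarrow> real" where
  "gamma_ratio m = Gamma (real m) / Gamma (real m - 1/2)"

lemma gamma_ratio_pos: "m \<ge> 1 \<Longrightarrow> gamma_ratio m > 0"
  unfolding gamma_ratio_def by (intro divide_pos_pos Gamma_real_pos) auto

lemma gamma_ratio_Suc:
  assumes "m \<ge> 1"
  shows "gamma_ratio (Suc m) = gamma_ratio m * (1 + 1 / (2 * real m - 1))"
proof -
  have "gamma_ratio (Suc m) = Gamma (real m + 1) / Gamma (real m - 1/2 + 1)"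
    by (simp add: gamma_ratio_def algebra_simps)
  also have "\<dots> = real m * Gamma (real m) / ((real m - 1/2) * Gamma (real m - 1/2))"
    using assms by (subst (1 2) Gamma_plus1) (auto elim!: nonpos_Ints_cases)
  finally show ?thesis
    using assms Gamma_real_pos[of "real m - 1/2"] unfolding gamma_ratio_def by (simp add: field_simps)
qed

lemma prod_eq_gamma_ratio:
  assumes "1 \<le> j" "j \<le> n"
  shows "(\<Prod>m = j..<n. 1 + 1 / (2 * real m - 1)) = gamma_ratio n / gamma_ratio j"
  using assms(2)
proof (induction n rule: dec_induct)
  case base
  then show ?case using gamma_ratio_pos[OF assms(1)] by simp
next
  case (step n)
  then show ?case using assms by (simp add: prod.atLeastLessThan_Suc gamma_ratio_Suc)
qed

lemma prod_telescope_odd: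
  assumes "1 \<le> j" "j \<le> n"
  shows "(\<Prod>m = j..<n. 1 + 2 / (2 * real m - 1)) = (2 * real n - 1) / (2 * real j - 1)"
  using assms(2)
proof (induction n rule: dec_induct)
  case base
  then show ?case using assms(1) by simp
next
  case (step n)
  have "x / y * (1 + 2 / x) = (x + 2) / y" if "x \<noteq> 0" for x y :: real
    using that by (cases "y = 0") (simp_all add: field_simps)
  moreover have "2 * real n - 1 \<noteq> 0"
    using assms step.hyps by auto
  ultimately have "(2 * real n - 1) / (2 * real j - 1) * (1 + 2 / (2 * real n - 1)) =
      (2 * real n - 1 + 2) / (2 * real j - 1)"
    by blast
  then show ?case
    unfolding prod.atLeastLessThan_Suc[OF step.hyps(1)] step.IH by (simp add: algebra_simps)
qed

lemma gamma_ratio_sqrt_tendsto: "(\<lambda>m. gamma_ratio m / sqrt (real m)) \<longlonglongrightarrow> 1"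
proof -
  have "Gamma (1/2 :: real) > 0"
    by (rule Gamma_real_pos) simp
  then have Gamma_half: "Gamma (1/2 :: real) \<noteq> 0"
    by linarith
  have eq: "Gamma_series' (1/2) m / Gamma (1/2) * ((real m - 1/2) / real m) = gamma_ratio m / sqrt (real m)"
    if "m \<ge> 1" for m
  proof -
    define G where "G = Gamma (real m - 1/2)"
    define r where "r = sqrt (real m)"
    have "fact (m - 1) = Gamma (real m)"
      using Gamma_fact[of "m - 1", where 'a = real] that by (simp add: of_nat_diff)
    moreover have "exp (ln (real m) / 2) = r"
      using that by (simp add: r_def powr_half_sqrt[symmetric] powr_def)
    moreover have "pochhammer (1/2) m = Gamma (real m - 1/2 + 1) / Gamma (1/2 :: real)"
      by (subst pochhammer_Gamma) (auto elim!: nonpos_Ints_cases simp: add.commute)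
    moreover have "Gamma (real m - 1/2 + 1) = (real m - 1/2) * G"
      unfolding G_def by (rule Gamma_plus1) (use that in \<open>auto elim!: nonpos_Ints_cases\<close>)
    ultimately have "Gamma_series' (1/2) m / Gamma (1/2) = Gamma (real m) * r / ((real m - 1/2) * G)"
      using Gamma_half unfolding Gamma_series'_def by simp
    then have "Gamma_series' (1/2) m / Gamma (1/2) * ((real m - 1/2) / real m) =
        Gamma (real m) * r / ((real m - 1/2) * G) * ((real m - 1/2) / real m)"
      by simp
    also have "\<dots> = Gamma (real m) / G * (r / real m)"
      using that by (simp add: nonzero_divide_mult_cancel_left)
    also have "r / real m = 1 / r"
      by (simp add: r_def sqrt_divide_self_eq inverse_eq_divide)
    finally show ?thesis
      unfolding gamma_ratio_def G_def r_def by simp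
  qed
  have "(\<lambda>m. (real m - 1/2) / real m) \<longlonglongrightarrow> 1"
    by real_asymp
  then have "(\<lambda>m. Gamma_series' (1/2) m / Gamma (1/2) * ((real m - 1/2) / real m)) \<longlonglongrightarrow>
      Gamma (1/2) / Gamma (1/2) * 1"
    using Gamma_half by (intro tendsto_intros Gamma_series'_LIMSEQ) simp_all
  with Gamma_half have "(\<lambda>m. Gamma_series' (1/2) m / Gamma (1/2) * ((real m - 1/2) / real m)) \<longlonglongrightarrow> 1"
    by simp
  then show ?thesis
    by (rule Lim_transform_eventually) (rule eventually_mono[OF eventually_ge_at_top[of 1] eq])
qed

lemma gamma_ratio_sq_gt:
  assumes "m \<ge> 2"
  shows "real m - 1 < (gamma_ratio m)\<^sup>2"
proof -
  define s where "s k = (gamma_ratio k)\<^sup>2 / (real k - 1)" for k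
  have s_decreasing: "s (Suc k) < s k" if "k \<ge> 2" for k
  proof -
    have "4 * real k * (real k - 1) < (2 * real k - 1)\<^sup>2"
      by (simp add: power2_eq_square algebra_simps)
    moreover have "(2 * real k - 1)\<^sup>2 > 0" "real k - 1 > 0"
      using that by auto
    ultimately have factor_less: "4 * real k / (2 * real k - 1)\<^sup>2 < 1 / (real k - 1)"
      by (simp add: divide_simps)
    have "1 + 1 / (2 * real k - 1) = 2 * real k / (2 * real k - 1)"
      using that by (simp add: field_simps)
    then have "s (Suc k) = (gamma_ratio k)\<^sup>2 * (4 * real k / (2 * real k - 1)\<^sup>2)"
      using that by (simp add: s_def gamma_ratio_Suc power_mult_distrib power_divide power2_eq_square)
    also have "\<dots> < (gamma_ratio k)\<^sup>2 * (1 / (real k - 1))"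
      using factor_less that gamma_ratio_pos[of k] by (intro mult_strict_left_mono) simp_all
    also have "\<dots> = s k"
      by (simp add: s_def)
    finally show ?thesis .
  qed
  have "(\<lambda>k. (gamma_ratio k / sqrt (real k))\<^sup>2 * (real k / (real k - 1))) \<longlonglongrightarrow> 1\<^sup>2 * 1"
    by (intro tendsto_mult tendsto_power gamma_ratio_sqrt_tendsto) real_asymp
  moreover have "\<forall>\<^sub>F k in sequentially. (gamma_ratio k / sqrt (real k))\<^sup>2 * (real k / (real k - 1)) = s k"
    using eventually_ge_at_top[of 2]
    by eventually_elim (simp add: s_def power_divide field_simps)
  ultimately have "s \<longlonglongrightarrow> 1"
    by (simp add: Lim_transform_eventually)
  moreover have "s k \<le> s (Suc m)" if "k \<ge> Suc m" for k
    using that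
  proof (induction k rule: dec_induct)
    case (step k)
    then show ?case using s_decreasing[of k] assms by simp
  qed simp
  ultimately have "1 \<le> s (Suc m)"
    by (intro LIMSEQ_le_const2) auto
  also have "\<dots> < s m"
    using s_decreasing[OF assms] .
  finally show ?thesis
    using assms by (simp add: s_def)
qed

lemma inverse_gamma_ratio_sq_less:
  assumes "j \<ge> 1"
  shows "1 / (gamma_ratio j)\<^sup>2 < 4 / (2 * real j - 1)"
proof -
  define q where "q = (2 * real j - 1) / (2 * real j)"
  have "q > 0"
    using assms by (simp add: q_def)
  have "gamma_ratio j = gamma_ratio (Suc j) * q"
    using assms gamma_ratio_pos[of j] by (simp add: gamma_ratio_Suc q_def field_simps)
  have "(2 * real j - 1) / 4 = (2 * real j - 1) * real j / (4 * real j)"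
    using assms by simp
  also have "\<dots> \<le> (2 * real j - 1) * (2 * real j - 1) / (4 * real j)"
    using assms by (intro divide_right_mono mult_left_mono) simp_all
  also have "\<dots> = real j * q\<^sup>2"
    using assms by (simp add: q_def power2_eq_square field_simps)
  also have "\<dots> < (gamma_ratio (Suc j))\<^sup>2 * q\<^sup>2"
    using gamma_ratio_sq_gt[of "Suc j"] assms \<open>q > 0\<close> by (intro mult_strict_right_mono) simp_all
  also have "\<dots> = (gamma_ratio j)\<^sup>2"
    by (simp add: \<open>gamma_ratio j = gamma_ratio (Suc j) * q\<close> power_mult_distrib)
  finally have "(2 * real j - 1) / 4 < (gamma_ratio j)\<^sup>2" .
  then have "1 / (gamma_ratio j)\<^sup>2 < 1 / ((2 * real j - 1) / 4)"
    using assms gamma_ratio_pos[OF assms] by (intro divide_strict_left_mono) auto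
  then show ?thesis
    by simp
qed

definition rel_gamma_ratio :: "nat \<Rightarrow> nat \<Rightarrow> real" where
  "rel_gamma_ratio n j = (gamma_ratio n / sqrt (real n)) / (gamma_ratio j / sqrt (real j))"

lemma rel_gamma_ratio_tendsto:
  assumes "filterlim j at_top at_top"
  shows "(\<lambda>n. rel_gamma_ratio n (j n)) \<longlonglongrightarrow> 1"
  using tendsto_divide[OF gamma_ratio_sqrt_tendsto filterlim_compose[OF gamma_ratio_sqrt_tendsto assms]]
  by (simp add: rel_gamma_ratio_def)

section \<open>Exact mean and variance of the degree\<close>

lemma mean_children_port:
  assumes "1 \<le> j" "j \<le> n"
  shows "measure_pmf.expectation (port n) (\<lambda>ps. real (children ps j) + 1) = gamma_ratio n / gamma_ratio j"
  using factorial_moment_port[OF assms, of 1] prod_eq_gamma_ratio[OF assms] by simp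

lemma second_factorial_moment_port:
  assumes "1 \<le> j" "j \<le> n"
  shows "measure_pmf.expectation (port n) (\<lambda>ps. (real (children ps j) + 1) * (real (children ps j) + 2))
         = 2 * (2 * real n - 1) / (2 * real j - 1)"
  using factorial_moment_port[OF assms, of 2] prod_telescope_odd[OF assms]
  by (simp add: pochhammer_Suc_prod eval_nat_numeral algebra_simps)

lemma deg_eq_children:
  assumes "1 \<le> j"
  shows "real (deg ps j) = real (children ps j) + 1 - (if j = 1 then 1 else 0)"
  using assms by (simp add: deg_def)

lemma ED_eq:
  assumes "1 \<le> j" "j \<le> n"
  shows "ED n j = gamma_ratio n / gamma_ratio j - (if j = 1 then 1 else 0)"
  unfolding ED_def deg_eq_children[OF assms(1)]
  using mean_children_port[OF assms] by (simp add: measure_pmf.prob_space)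

lemma VarD_eq:
  assumes "1 \<le> j" "j \<le> n"
  defines "e \<equiv> gamma_ratio n / gamma_ratio j"
  shows "VarD n j = 2 * (2 * real n - 1) / (2 * real j - 1) - e - e\<^sup>2"
proof -
  define W where "W ps = real (children ps j) + 1" for ps
  define d :: real where "d = (if j = 1 then 1 else 0)"
  have EW: "measure_pmf.expectation (port n) W = e"
    unfolding W_def e_def by (rule mean_children_port[OF assms(1,2)])
  have "measure_pmf.expectation (port n) (\<lambda>ps. W ps * (W ps + 1)) = 2 * (2 * real n - 1) / (2 * real j - 1)"
    using second_factorial_moment_port[OF assms(1,2)] by (simp add: W_def algebra_simps)
  then have EW2: "measure_pmf.expectation (port n) (\<lambda>ps. (W ps)\<^sup>2) = 2 * (2 * real n - 1) / (2 * real j - 1) - e"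
    using EW by (simp add: algebra_simps power2_eq_square)
  have deg_W: "real (deg ps j) = W ps - d" for ps
    using deg_eq_children[OF assms(1)] by (simp add: W_def d_def)
  have "VarD n j = measure_pmf.variance (port n) W"
    by (simp add: VarD_def deg_W EW measure_pmf.prob_space)
  also have "\<dots> = measure_pmf.expectation (port n) (\<lambda>ps. (W ps)\<^sup>2) - (measure_pmf.expectation (port n) W)\<^sup>2"
    by (rule measure_pmf.variance_eq) simp_all
  also have "\<dots> = 2 * (2 * real n - 1) / (2 * real j - 1) - e - e\<^sup>2"
    by (simp only: EW EW2)
  finally show ?thesis .
qed

lemma ED_eq_normalized:
  assumes "2 \<le> j" "j \<le> n"
  shows "ED n j = rel_gamma_ratio n j * sqrt (real n / real j)"
  using assms ED_eq[of j n] gamma_ratio_pos[of j]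
  by (simp add: rel_gamma_ratio_def real_sqrt_divide field_simps)

lemma VarD_eq_normalized:
  assumes "1 \<le> j" "j \<le> n"
  defines "\<rho> \<equiv> rel_gamma_ratio n j" and "q \<equiv> real j / real n"
  shows "q * VarD n j = 2 * ((2 * real n - 1) / real n) / ((2 * real j - 1) / real j) - \<rho> * sqrt q - \<rho>\<^sup>2"
proof -
  define e where "e = gamma_ratio n / gamma_ratio j"
  have "q > 0"
    using assms by (simp add: q_def)
  have e_eq: "e = \<rho> / sqrt q"
    using assms gamma_ratio_pos[of j] by (simp add: e_def \<rho>_def rel_gamma_ratio_def q_def real_sqrt_divide field_simps)
  have "q * VarD n j = q * (2 * (2 * real n - 1) / (2 * real j - 1)) - q * e - q * e\<^sup>2"
    using VarD_eq[OF assms(1,2)] by (simp add: e_def right_diff_distrib)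
  also have "q * (2 * (2 * real n - 1) / (2 * real j - 1)) = 2 * ((2 * real n - 1) / real n) / ((2 * real j - 1) / real j)"
    using assms by (simp add: q_def field_simps)
  also have "q * e = \<rho> * (q / sqrt q)"
    unfolding e_eq by (simp add: ac_simps)
  also have "q / sqrt q = sqrt q"
    using \<open>q > 0\<close> by (simp add: real_div_sqrt)
  also have "q * e\<^sup>2 = \<rho>\<^sup>2"
    using \<open>q > 0\<close> unfolding e_eq by (simp add: power_divide)
  finally show ?thesis .
qed

section \<open>Asymptotics\<close>

lemma tendsto_quotient_imp_asymp_equiv:
  fixes f g :: "'a \<Rightarrow> real"
  assumes "((\<lambda>x. f x / g x) \<longlongrightarrow> c) F" "c \<noteq> 0"
  shows "f \<sim>[F] (\<lambda>x. c * g x)"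
proof (rule asymp_equivI')
  have "((\<lambda>x. f x / g x / c) \<longlongrightarrow> c / c) F"
    using assms by (intro tendsto_divide tendsto_const)
  then show "((\<lambda>x. f x / (c * g x)) \<longlongrightarrow> 1) F"
    using assms(2) by (simp add: mult.commute)
qed

lemma tendsto_odd_div_real:
  assumes "filterlim f at_top F"
  shows "((\<lambda>x. (2 * real (f x) - 1) / real (f x)) \<longlongrightarrow> 2) F"
proof -
  have "((\<lambda>m. (2 * real m - 1) / real m) \<longlongrightarrow> 2) at_top"
    by real_asymp
  then show ?thesis
    using assms by (rule filterlim_compose)
qed

lemma eventually_index_bounds:
  assumes "filterlim j at_top at_top" "\<forall>\<^sub>F n in at_top. real (j n) / real n < 1"
  shows "\<forall>\<^sub>F n in at_top. 2 \<le> j n \<and> j n \<le> n"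
proof -
  have "\<forall>\<^sub>F n in at_top. 2 \<le> j n"
    using assms(1) by (simp add: filterlim_at_top)
  with assms(2) eventually_gt_at_top[of 0] show ?thesis
    by eventually_elim (auto simp: divide_less_eq)
qed

lemma ED_asymp_equiv_fixed:
  assumes "j \<ge> 1"
  shows "(\<lambda>n. ED n j) \<sim>[at_top] (\<lambda>n. Gamma (real j - 1/2) / Gamma (real j) * sqrt (real n))"
proof (rule asymp_equivI')
  define d :: real where "d = (if j = 1 then 1 else 0)"
  have "(\<lambda>n. d * gamma_ratio j / sqrt (real n)) \<longlonglongrightarrow> 0"
    by real_asymp
  with gamma_ratio_sqrt_tendsto
  have "(\<lambda>n. gamma_ratio n / sqrt (real n) - d * gamma_ratio j / sqrt (real n)) \<longlonglongrightarrow> 1 - 0"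
    by (rule tendsto_diff)
  moreover have "\<forall>\<^sub>F n in sequentially. gamma_ratio n / sqrt (real n) - d * gamma_ratio j / sqrt (real n) =
      ED n j / (Gamma (real j - 1/2) / Gamma (real j) * sqrt (real n))"
    using eventually_ge_at_top[of j]
  proof eventually_elim
    case (elim n)
    have Gamma_quotient: "Gamma (real j - 1/2) / Gamma (real j) = 1 / gamma_ratio j"
      by (simp add: gamma_ratio_def)
    have "sqrt (real n) > 0"
      using assms elim by simp
    then show ?case
      unfolding Gamma_quotient ED_eq[OF assms elim]
      using gamma_ratio_pos[OF assms] by (simp add: d_def field_simps)
  qed
  ultimately show "(\<lambda>n. ED n j / (Gamma (real j - 1/2) / Gamma (real j) * sqrt (real n))) \<longlonglongrightarrow> 1"
    by (simp add: Lim_transform_eventually)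
qed

lemma VarD_asymp_equiv_fixed:
  assumes "j \<ge> 1"
  shows "(\<lambda>n. VarD n j) \<sim>[at_top]
           (\<lambda>n. (4 / (2 * real j - 1) - (Gamma (real j - 1/2))\<^sup>2 / (Gamma (real j))\<^sup>2) * real n)"
proof (rule tendsto_quotient_imp_asymp_equiv)
  define \<rho> where "\<rho> n = rel_gamma_ratio n j" for n
  define q where "q n = real j / real n" for n
  have q: "q \<longlonglongrightarrow> 0"
    unfolding q_def by real_asymp
  have "(\<lambda>n. (2 * ((2 * real n - 1) / real n) / ((2 * real j - 1) / real j) - \<rho> n * sqrt (q n) - (\<rho> n)\<^sup>2) / real j)
      \<longlonglongrightarrow> (2 * 2 / ((2 * real j - 1) / real j) - 1 / (gamma_ratio j / sqrt (real j)) * sqrt 0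
            - (1 / (gamma_ratio j / sqrt (real j)))\<^sup>2) / real j"
    unfolding \<rho>_def rel_gamma_ratio_def using assms gamma_ratio_pos[OF assms]
    by (intro tendsto_intros gamma_ratio_sqrt_tendsto tendsto_odd_div_real[OF filterlim_ident] q) auto
  moreover have "(2 * 2 / ((2 * real j - 1) / real j) - 1 / (gamma_ratio j / sqrt (real j)) * sqrt 0
      - (1 / (gamma_ratio j / sqrt (real j)))\<^sup>2) / real j = 4 / (2 * real j - 1) - 1 / (gamma_ratio j)\<^sup>2"
    using assms by (simp add: power_divide field_simps)
  moreover have "\<forall>\<^sub>F n in sequentially.
      (2 * ((2 * real n - 1) / real n) / ((2 * real j - 1) / real j) - \<rho> n * sqrt (q n) - (\<rho> n)\<^sup>2) / real j
        = VarD n j / real n"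
    using eventually_ge_at_top[of j]
  proof eventually_elim
    case (elim n)
    then have "q n * VarD n j =
        2 * ((2 * real n - 1) / real n) / ((2 * real j - 1) / real j) - \<rho> n * sqrt (q n) - (\<rho> n)\<^sup>2"
      unfolding \<rho>_def q_def using assms by (intro VarD_eq_normalized) auto
    then show ?case
      using assms elim by (simp add: q_def field_simps)
  qed
  ultimately show "(\<lambda>n. VarD n j / real n) \<longlonglongrightarrow> 4 / (2 * real j - 1) - (Gamma (real j - 1/2))\<^sup>2 / (Gamma (real j))\<^sup>2"
    by (simp add: Lim_transform_eventually gamma_ratio_def power_divide)
  show "4 / (2 * real j - 1) - (Gamma (real j - 1/2))\<^sup>2 / (Gamma (real j))\<^sup>2 \<noteq> 0"
    using inverse_gamma_ratio_sq_less[OF assms] by (simp add: gamma_ratio_def power_divide)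
qed

lemma ED_asymp_equiv_growing:
  assumes "\<forall>n. j n \<le> n" "filterlim j at_top at_top"
  shows "(\<lambda>n. ED n (j n)) \<sim>[at_top] (\<lambda>n. sqrt (real n / real (j n)))"
proof (rule asymp_equivI')
  have "\<forall>\<^sub>F n in at_top. 2 \<le> j n"
    using assms(2) by (simp add: filterlim_at_top)
  then have "\<forall>\<^sub>F n in sequentially. rel_gamma_ratio n (j n) = ED n (j n) / sqrt (real n / real (j n))"
  proof eventually_elim
    case (elim n)
    moreover have "j n \<le> n"
      using assms(1) by simp
    ultimately show ?case
      by (simp add: ED_eq_normalized)
  qed
  with rel_gamma_ratio_tendsto[OF assms(2)]
  show "(\<lambda>n. ED n (j n) / sqrt (real n / real (j n))) \<longlonglongrightarrow> 1"
    by (rule Lim_transform_eventually)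
qed

lemma VarD_asymp_equiv_sublinear:
  assumes "filterlim j at_top at_top" "(\<lambda>n. real (j n)) \<in> o(\<lambda>n. real n)"
  shows "(\<lambda>n. VarD n (j n)) \<sim>[at_top] (\<lambda>n. real n / real (j n))"
proof (rule asymp_equivI')
  define \<rho> where "\<rho> n = rel_gamma_ratio n (j n)" for n
  define q where "q n = real (j n) / real n" for n
  have q: "q \<longlonglongrightarrow> 0"
    unfolding q_def using assms(2) by (rule smalloD_tendsto)
  have "(\<lambda>n. 2 * ((2 * real n - 1) / real n) / ((2 * real (j n) - 1) / real (j n)) - \<rho> n * sqrt (q n) - (\<rho> n)\<^sup>2)
      \<longlonglongrightarrow> 2 * 2 / 2 - 1 * sqrt 0 - 1\<^sup>2"
    unfolding \<rho>_def
    by (intro tendsto_intros tendsto_odd_div_real[OF filterlim_ident] tendsto_odd_div_real[OF assms(1)]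
        rel_gamma_ratio_tendsto[OF assms(1)] q) simp
  moreover have "\<forall>\<^sub>F n in at_top. 2 \<le> j n \<and> j n \<le> n"
    using assms(1) order_tendstoD(2)[OF q zero_less_one] by (intro eventually_index_bounds) (simp_all add: q_def)
  then have "\<forall>\<^sub>F n in sequentially.
      2 * ((2 * real n - 1) / real n) / ((2 * real (j n) - 1) / real (j n)) - \<rho> n * sqrt (q n) - (\<rho> n)\<^sup>2 =
      VarD n (j n) / (real n / real (j n))"
  proof eventually_elim
    case (elim n)
    then have "q n * VarD n (j n) =
        2 * ((2 * real n - 1) / real n) / ((2 * real (j n) - 1) / real (j n)) - \<rho> n * sqrt (q n) - (\<rho> n)\<^sup>2"
      unfolding \<rho>_def q_def by (intro VarD_eq_normalized) auto
    moreover have "VarD n (j n) / (real n / real (j n)) = q n * VarD n (j n)"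
      by (simp add: q_def)
    ultimately show ?case
      by simp
  qed
  ultimately show "(\<lambda>n. VarD n (j n) / (real n / real (j n))) \<longlonglongrightarrow> 1"
    by (simp add: Lim_transform_eventually)
qed

lemma VarD_tendsto_linear:
  assumes "0 < \<theta>" "\<theta> < 1" "((\<lambda>n. real (j n) / real n) \<longlongrightarrow> \<theta>) at_top"
  shows "((\<lambda>n. VarD n (j n)) \<longlongrightarrow> 1 / \<theta> - 1 / sqrt \<theta>) at_top"
proof -
  define \<rho> where "\<rho> n = rel_gamma_ratio n (j n)" for n
  define q where "q n = real (j n) / real n" for n
  have q: "q \<longlonglongrightarrow> \<theta>"
    unfolding q_def by (fact assms(3))
  have "filterlim (\<lambda>n. q n * real n) at_top sequentially"
    by (rule filterlim_tendsto_pos_mult_at_top[OF q assms(1) filterlim_real_sequentially])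
  moreover have "\<forall>\<^sub>F n in sequentially. q n * real n = real (j n)"
    using eventually_gt_at_top[of 0] by eventually_elim (simp add: q_def)
  ultimately have "filterlim (\<lambda>n. real (j n)) at_top sequentially"
    by (rule filterlim_cong[THEN iffD1, OF refl refl, rotated])
  then have j: "filterlim j at_top at_top"
    by (simp add: filterlim_sequentially_iff_filterlim_real)
  have "(\<lambda>n. (2 * ((2 * real n - 1) / real n) / ((2 * real (j n) - 1) / real (j n)) - \<rho> n * sqrt (q n)
      - (\<rho> n)\<^sup>2) / q n) \<longlonglongrightarrow> (2 * 2 / 2 - 1 * sqrt \<theta> - 1\<^sup>2) / \<theta>"
    unfolding \<rho>_def using assms(1)
    by (intro tendsto_intros tendsto_odd_div_real[OF filterlim_ident] tendsto_odd_div_real[OF j]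
        rel_gamma_ratio_tendsto[OF j] q) simp_all
  moreover have "(2 * 2 / 2 - 1 * sqrt \<theta> - 1\<^sup>2) / \<theta> = 1 / \<theta> - 1 / sqrt \<theta>"
    using assms(1) by (simp add: diff_divide_distrib sqrt_divide_self_eq inverse_eq_divide)
  moreover have "\<forall>\<^sub>F n in at_top. 2 \<le> j n \<and> j n \<le> n"
    using j order_tendstoD(2)[OF q assms(2)] by (intro eventually_index_bounds) (simp_all add: q_def)
  then have "\<forall>\<^sub>F n in sequentially.
      (2 * ((2 * real n - 1) / real n) / ((2 * real (j n) - 1) / real (j n)) - \<rho> n * sqrt (q n)
        - (\<rho> n)\<^sup>2) / q n = VarD n (j n)"
  proof eventually_elim
    case (elim n)
    then have "q n * VarD n (j n) =
        2 * ((2 * real n - 1) / real n) / ((2 * real (j n) - 1) / real (j n)) - \<rho> n * sqrt (q n) - (\<rho> n)\<^sup>2"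
      unfolding \<rho>_def q_def by (intro VarD_eq_normalized) auto
    moreover have "q n > 0"
      using elim by (simp add: q_def)
    ultimately show ?case
      by (simp add: field_simps)
  qed
  ultimately show ?thesis
    by (simp add: Lim_transform_eventually)
qed

theorem corollary3p2:
  shows
   "(\<forall>j::nat. j \<ge> 1 \<longrightarrow>
        (\<lambda>n. ED n j) \<sim>[at_top] (\<lambda>n. Gamma (real j - 1/2) / Gamma (real j) * sqrt (real n)) \<and>
        (\<lambda>n. VarD n j) \<sim>[at_top]
           (\<lambda>n. (4 / (2 * real j - 1) - (Gamma (real j - 1/2))\<^sup>2 / (Gamma (real j))\<^sup>2) * real n))
    \<and> (\<forall>j::nat \<Rightarrow> nat. (\<forall>n. j n \<le> n) \<and> filterlim j at_top at_top \<longrightarrow>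
        (\<lambda>n. ED n (j n)) \<sim>[at_top] (\<lambda>n. sqrt (real n / real (j n))))
    \<and> (\<forall>j::nat \<Rightarrow> nat. filterlim j at_top at_top \<and> (\<lambda>n. real (j n)) \<in> o(\<lambda>n. real n) \<longrightarrow>
        (\<lambda>n. VarD n (j n)) \<sim>[at_top] (\<lambda>n. real n / real (j n)))
    \<and> (\<forall>(j::nat \<Rightarrow> nat) (\<theta>::real). 0 < \<theta> \<and> \<theta> < 1 \<and>
          ((\<lambda>n. real (j n) / real n) \<longlongrightarrow> \<theta>) at_top \<longrightarrow>
        ((\<lambda>n. VarD n (j n)) \<longlongrightarrow> 1 / \<theta> - 1 / sqrt \<theta>) at_top)"
  by (blast intro: ED_asymp_equiv_fixed VarD_asymp_equiv_fixed ED_asymp_equiv_growing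
      VarD_asymp_equiv_sublinear VarD_tendsto_linear)

end
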